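(* Let $G=(V,E)$ be a graph with a string representation $\varphi$ in the plane. Let $\pi_1$ and $\pi_2$ be two internally disjoint curves with endpoints $a$ and $b$, let $F$ be the closed face of $\mathbb{R}^2\setminus(\pi_1\cup\pi_2)$ containing the string of the vertex occupied by the robber, and let $D$ be the connected component of $G_F$ containing the robber's vertex. If $\pi_1$ and $\pi_2$ are shortest curves relative to $D$, each guarded by five cops, then the robber is confined to $D$.
   Context: A string representation assigns to each vertex $v$ a bounded curve $\varphi(v)\subseteq\mathbb{R}^2$ with distinct $u,v$ adjacent iff $\varphi(u)\cap\varphi(v)\ne\emptyset$. A face of $\mathbb{R}^2\setminus X$ is an arc-connected component, a closed face its closure. For $X\subseteq\mathbb{R}^2$, a vertex $v$ is contained in $X$ if $\varphi(v)\subseteq\mathrm{int}(X)$, and $G_X$ is the subgraph induced by vertices contained in $X$. A path $P$ is a shortest path relative to $D\subseteq V$ if it is shortest in $G[P\cup D]$. For such $P$ from $u$ to $v$ and points $A\in\varphi(u)$, $B\in\varphi(v)$, a curve $\pi\subseteq\bigcup_{p\in P}\varphi(p)$ from $A$ to $B$ whose intersection with each $\varphi(p)$ is connected, these intersections occurring along $\pi$ in the order of $P$, is a shortest curve of $P$ relative to $D$; a shortest curve relative to $D$ is one for some shortest path relative to $D$. Guarding a shortest curve $\pi$ means guarding $N[P]$ for the corresponding path $P$, i.e. the cops' strategy ensures the robber is immediately captured upon moving to any vertex of $N[P]$. The robber is confined to $D$ if he is immediately captured upon moving to any vertex outside $D$. (Game: cops and robber alternate, each staying or moving along an edge; capture when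 a cop is on the robber's vertex.) *)

theory Defs
  imports "HOL-Analysis.Analysis"
begin

definition simple_graph :: "'v set \<Rightarrow> ('v \<Rightarrow> 'v \<Rightarrow> bool) \<Rightarrow> bool" where
  "simple_graph V E \<longleftrightarrow> finite V \<and> (\<forall>u v. E u v \<longrightarrow> u \<in> V \<and> v \<in> V \<and> u \<noteq> v \<and> E v u)"

definition string_rep :: "'v set \<Rightarrow> ('v \<Rightarrow> 'v \<Rightarrow> bool) \<Rightarrow> ('v \<Rightarrow> complex set) \<Rightarrow> bool" where
  "string_rep V E \<phi> \<longleftrightarrow>
     (\<forall>v\<in>V. \<exists>g. path g \<and> \<phi> v = path_image g) \<and>
     (\<forall>u\<in>V. \<forall>v\<in>V. u \<noteq> v \<longrightarrow> (E u v \<longleftrightarrow> \<phi> u \<inter> \<phi> v \<noteq> {}))"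

definition gwalk :: "('v \<Rightarrow> 'v \<Rightarrow> bool) \<Rightarrow> 'v set \<Rightarrow> 'v list \<Rightarrow> bool" where
  "gwalk E W xs \<longleftrightarrow> xs \<noteq> [] \<and> set xs \<subseteq> W \<and>
     (\<forall>i. Suc i < length xs \<longrightarrow> E (xs ! i) (xs ! Suc i))"

definition gpath :: "('v \<Rightarrow> 'v \<Rightarrow> bool) \<Rightarrow> 'v set \<Rightarrow> 'v list \<Rightarrow> bool" where
  "gpath E W xs \<longleftrightarrow> gwalk E W xs \<and> distinct xs"

definition shortest_path_rel :: "'v set \<Rightarrow> ('v \<Rightarrow> 'v \<Rightarrow> bool) \<Rightarrow> 'v set \<Rightarrow> 'v list \<Rightarrow> bool" where
  "shortest_path_rel V E D P \<longleftrightarrow> gpath E V P \<and>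
     (\<forall>Q. gwalk E ((set P \<union> D) \<inter> V) Q \<and> hd Q = hd P \<and> last Q = last P \<longrightarrow> length P \<le> length Q)"

text \<open>A shortest curve of P: a curve from a point of \<phi>(first P) to a point of \<phi>(last P),
  inside the union of the strings of P, meeting each string of P in a connected set, and
  traversing the strings in the order of P (subdivision of the parameter interval).\<close>
definition curve_of_path :: "('v \<Rightarrow> complex set) \<Rightarrow> 'v list \<Rightarrow> (real \<Rightarrow> complex) \<Rightarrow> bool" where
  "curve_of_path \<phi> P g \<longleftrightarrow> path g \<and> P \<noteq> [] \<and>
     pathstart g \<in> \<phi> (hd P) \<and> pathfinish g \<in> \<phi> (last P) \<and>
     path_image g \<subseteq> (\<Union>p\<in>set P. \<phi> p) \<and>
     (\<forall>p\<in>set P. connected (path_image g \<inter> \<phi> p)) \<and>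
     (\<exists>s :: nat \<Rightarrow> real. s 0 = 0 \<and> s (length P) = 1 \<and>
        (\<forall>i<length P. s i \<le> s (Suc i) \<and> g ` {s i..s (Suc i)} \<subseteq> \<phi> (P ! i)))"

definition shortest_curve_rel ::
  "'v set \<Rightarrow> ('v \<Rightarrow> 'v \<Rightarrow> bool) \<Rightarrow> ('v \<Rightarrow> complex set) \<Rightarrow> 'v set \<Rightarrow> 'v list \<Rightarrow> (real \<Rightarrow> complex) \<Rightarrow> bool" where
  "shortest_curve_rel V E \<phi> D P g \<longleftrightarrow> shortest_path_rel V E D P \<and> curve_of_path \<phi> P g"

definition closed_nbhd :: "'v set \<Rightarrow> ('v \<Rightarrow> 'v \<Rightarrow> bool) \<Rightarrow> 'v set \<Rightarrow> 'v set" where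
  "closed_nbhd V E S = {w\<in>V. \<exists>p\<in>S. w = p \<or> E p w}"

text \<open>Vertices contained in X (vertex set of G_X).\<close>
definition contained_in :: "'v set \<Rightarrow> ('v \<Rightarrow> complex set) \<Rightarrow> complex set \<Rightarrow> 'v set" where
  "contained_in V \<phi> X = {v\<in>V. \<phi> v \<subseteq> interior X}"

definition gcomponent :: "('v \<Rightarrow> 'v \<Rightarrow> bool) \<Rightarrow> 'v set \<Rightarrow> 'v \<Rightarrow> 'v set" where
  "gcomponent E W r = {v. \<exists>xs. gwalk E W xs \<and> hd xs = r \<and> last xs = v}"

text \<open>Round t: cops are at positions C t (cop k at C t k), then the
  robber moves to R t; then the cops move to C (Suc t).\<close>
definition valid_play :: "'v set \<Rightarrow> ('v \<Rightarrow> 'v \<Rightarrow> bool) \<Rightarrow> (nat \<Rightarrow> 'c \<Rightarrow> 'v) \<Rightarrow> (nat \<Rightarrow> 'v) \<Rightarrow> bool" where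
  "valid_play V E C R \<longleftrightarrow>
     (\<forall>t. R t \<in> V \<and> (\<forall>k. C t k \<in> V)) \<and>
     (\<forall>t. R (Suc t) = R t \<or> E (R t) (R (Suc t))) \<and>
     (\<forall>t k. C (Suc t) k = C t k \<or> E (C t k) (C (Suc t) k))"

definition captured_by :: "'c set \<Rightarrow> (nat \<Rightarrow> 'c \<Rightarrow> 'v) \<Rightarrow> (nat \<Rightarrow> 'v) \<Rightarrow> nat \<Rightarrow> bool" where
  "captured_by K C R t \<longleftrightarrow> (\<exists>k\<in>K. C t k = R t \<or> C (Suc t) k = R t)"

definition alive :: "(nat \<Rightarrow> 'c \<Rightarrow> 'v) \<Rightarrow> (nat \<Rightarrow> 'v) \<Rightarrow> nat \<Rightarrow> bool" where
  "alive C R t \<longleftrightarrow> (\<forall>s<t. \<not> captured_by UNIV C R s)"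

definition guards :: "'c set \<Rightarrow> (nat \<Rightarrow> 'c \<Rightarrow> 'v) \<Rightarrow> (nat \<Rightarrow> 'v) \<Rightarrow> 'v set \<Rightarrow> bool" where
  "guards K C R X \<longleftrightarrow> (\<forall>t. alive C R t \<and> R t \<in> X \<longrightarrow> captured_by K C R t)"

definition confines :: "'c set \<Rightarrow> (nat \<Rightarrow> 'c \<Rightarrow> 'v) \<Rightarrow> (nat \<Rightarrow> 'v) \<Rightarrow> 'v set \<Rightarrow> bool" where
  "confines K C R D \<longleftrightarrow> (\<forall>t. alive C R t \<and> R t \<notin> D \<longrightarrow> captured_by K C R t)"

end

theory Submission
  imports Defs
begin

text \<open>The robber starts in \<open>D\<close>, so the first time he leaves \<open>D\<close> he moves from a vertex \<open>u\<close>
  of \<open>D\<close> to a neighbour \<open>v\<close> outside \<open>D\<close>. Then \<open>v\<close> is not contained in \<open>F\<close>, yet its string meets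
  the string of \<open>u\<close>, which lies in the interior of \<open>F\<close>; being connected, the string of \<open>v\<close>
  crosses the frontier of that interior, which is part of \<open>\<pi>\<^sub>1 \<union> \<pi>\<^sub>2\<close>. A shortest curve lies
  in the union of the strings of its path, so \<open>v\<close> is in \<open>N[P\<^sub>1]\<close> or \<open>N[P\<^sub>2]\<close>, and the robber is
  captured by the cops guarding that curve.\<close>

lemma frontier_interior_closure_component_subset:
  fixes A :: "'a::real_normed_vector set"
  assumes "closed A"
  shows "frontier (interior (closure (connected_component_set (- A) x))) \<subseteq> A"
proof -
  let ?S = "connected_component_set (- A) x"
  have "frontier (interior (closure ?S)) \<subseteq> frontier (closure ?S)"
    by (rule frontier_interior_subset)
  also have "\<dots> \<subseteq> frontier ?S"
    unfolding frontier_def using interior_mono[OF closure_subset] by auto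
  also have "\<dots> \<subseteq> frontier (- A)"
    by (rule frontier_of_connected_component_subset)
  also have "\<dots> \<subseteq> A"
    using assms by (simp add: frontier_complement frontier_subset_closed)
  finally show ?thesis .
qed

lemma gcomponent_subset: "gcomponent E W r \<subseteq> W"
  unfolding gcomponent_def gwalk_def by auto

lemma gcomponent_refl: "r \<in> W \<Longrightarrow> r \<in> gcomponent E W r"
  unfolding gcomponent_def gwalk_def by (intro CollectI exI[of _ "[r]"]) auto

lemma gwalk_snoc:
  assumes "gwalk E W xs" "E (last xs) v" "v \<in> W"
  shows "gwalk E W (xs @ [v])"
  unfolding gwalk_def
proof (intro conjI allI impI)
  show "set (xs @ [v]) \<subseteq> W"
    using assms unfolding gwalk_def by auto
next
  fix i
  assume i: "Suc i < length (xs @ [v])"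
  show "E ((xs @ [v]) ! i) ((xs @ [v]) ! Suc i)"
  proof (cases "Suc i < length xs")
    case True
    then show ?thesis
      using assms(1) unfolding gwalk_def by (simp add: nth_append)
  next
    case False
    then have "i = length xs - 1" "xs \<noteq> []"
      using i assms(1) unfolding gwalk_def by auto
    then show ?thesis
      using assms(2) by (simp add: nth_append last_conv_nth)
  qed
qed simp

lemma gcomponent_extend:
  assumes "u \<in> gcomponent E W r" "E u v" "v \<in> W"
  shows "v \<in> gcomponent E W r"
proof -
  obtain xs where xs: "gwalk E W xs" "hd xs = r" "last xs = u"
    using assms(1) unfolding gcomponent_def by blast
  then have "gwalk E W (xs @ [v])"
    using assms(2,3) by (intro gwalk_snoc) auto
  moreover have "hd (xs @ [v]) = r"
    using xs by (simp add: gwalk_def)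
  ultimately show ?thesis
    unfolding gcomponent_def by force
qed

lemma string_rep_adj_iff:
  "string_rep V E \<phi> \<Longrightarrow> u \<in> V \<Longrightarrow> v \<in> V \<Longrightarrow> u \<noteq> v \<Longrightarrow> E u v \<longleftrightarrow> \<phi> u \<inter> \<phi> v \<noteq> {}"
  unfolding string_rep_def by blast

lemma string_connected:
  assumes "string_rep V E \<phi>" "v \<in> V"
  shows "connected (\<phi> v)"
proof -
  obtain g where "path g" "\<phi> v = path_image g"
    using assms unfolding string_rep_def by blast
  then show ?thesis
    by (simp add: connected_path_image)
qed

lemma string_leaving_component_meets_frontier:
  assumes rep: "string_rep V E \<phi>"
    and u: "u \<in> gcomponent E (contained_in V \<phi> F) r"
    and uv: "E u v" and v: "v \<in> V" "v \<notin> gcomponent E (contained_in V \<phi> F) r"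
  shows "\<phi> v \<inter> frontier (interior F) \<noteq> {}"
proof -
  have "u \<in> contained_in V \<phi> F"
    by (rule subsetD[OF gcomponent_subset u])
  then have "u \<in> V" and u_inside: "\<phi> u \<subseteq> interior F"
    by (simp_all add: contained_in_def)
  have "u \<noteq> v"
    using u v(2) by blast
  then have "\<phi> u \<inter> \<phi> v \<noteq> {}"
    using string_rep_adj_iff[OF rep \<open>u \<in> V\<close> v(1)] uv by blast
  then have meets: "\<phi> v \<inter> interior F \<noteq> {}"
    using u_inside by blast
  have "v \<notin> contained_in V \<phi> F"
    using gcomponent_extend[OF u uv] v(2) by blast
  then have "\<phi> v - interior F \<noteq> {}"
    using v(1) unfolding contained_in_def by blast
  with meets show ?thesis
    by (rule connected_Int_frontier[OF string_connected[OF rep v(1)]])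
qed

lemma string_meeting_curve_in_closed_nbhd:
  assumes rep: "string_rep V E \<phi>" and P: "curve_of_path \<phi> P g" "set P \<subseteq> V"
    and z: "z \<in> path_image g" "z \<in> \<phi> v" and v: "v \<in> V"
  shows "v \<in> closed_nbhd V E (set P)"
proof -
  obtain p where p: "p \<in> set P" "z \<in> \<phi> p"
    using P(1) z(1) unfolding curve_of_path_def by blast
  moreover have "p \<in> V"
    using p(1) P(2) by blast
  ultimately have "v = p \<or> E p v"
    using string_rep_adj_iff[OF rep _ v] z(2) by blast
  then show ?thesis
    unfolding closed_nbhd_def using p(1) v by blast
qed

lemma shortest_curve_rel_path_subset:
  "shortest_curve_rel V E \<phi> D P g \<Longrightarrow> set P \<subseteq> V"
  unfolding shortest_curve_rel_def shortest_path_rel_def gpath_def gwalk_def by blast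

lemma guards_Un:
  "guards K1 C R X1 \<Longrightarrow> guards K2 C R X2 \<Longrightarrow> guards (K1 \<union> K2) C R (X1 \<union> X2)"
  unfolding guards_def captured_by_def by blast

lemma confines_if_guards_exits:
  assumes play: "valid_play V E C R" and start: "R 0 \<in> D"
    and exits: "\<And>u v. u \<in> D \<Longrightarrow> E u v \<Longrightarrow> v \<notin> D \<Longrightarrow> v \<in> X"
    and guard: "guards K C R X"
  shows "confines K C R D"
  unfolding confines_def
proof (intro allI impI, elim conjE)
  fix t
  assume "alive C R t" "R t \<notin> D"
  then show "captured_by K C R t"
  proof (induction t)
    case 0
    then show ?case using start by simp
  next
    case (Suc s)
    show ?case
    proof (cases "R s \<in> D")
      case True
      then have "E (R s) (R (Suc s))"
        using play Suc.prems(2) unfolding valid_play_def by metis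
      then show ?thesis
        using exits[OF True] guard Suc.prems unfolding guards_def by blast
    next
      case False
      have "alive C R s"
        using Suc.prems(1) unfolding alive_def by auto
      then have "captured_by UNIV C R s"
        using Suc.IH False unfolding captured_by_def by blast
      then show ?thesis
        using Suc.prems(1) unfolding alive_def by blast
    qed
  qed
qed

theorem lemma8:
  fixes V :: "'v set" and E :: "'v \<Rightarrow> 'v \<Rightarrow> bool" and \<phi> :: "'v \<Rightarrow> complex set"
    and \<pi>1 \<pi>2 :: "real \<Rightarrow> complex" and a b :: complex
    and F :: "complex set" and D :: "'v set" and P1 P2 :: "'v list"
    and C :: "nat \<Rightarrow> 'c \<Rightarrow> 'v" and R :: "nat \<Rightarrow> 'v" and K1 K2 :: "'c set"
  assumes "simple_graph V E"
    and "string_rep V E \<phi>"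
    and "path \<pi>1" and "path \<pi>2"
    and "pathstart \<pi>1 = a" and "pathfinish \<pi>1 = b"
    and "pathstart \<pi>2 = a" and "pathfinish \<pi>2 = b"
    and "path_image \<pi>1 \<inter> path_image \<pi>2 = {a, b}"
    and "valid_play V E C R"
    and "\<exists>x. x \<notin> path_image \<pi>1 \<union> path_image \<pi>2 \<and>
           F = closure (connected_component_set (- (path_image \<pi>1 \<union> path_image \<pi>2)) x)"
    and "\<phi> (R 0) \<subseteq> F"
    and "R 0 \<in> contained_in V \<phi> F"
    and "D = gcomponent E (contained_in V \<phi> F) (R 0)"
    and "shortest_curve_rel V E \<phi> D P1 \<pi>1"
    and "shortest_curve_rel V E \<phi> D P2 \<pi>2"
    and "card K1 = 5" and "card K2 = 5" and "K1 \<inter> K2 = {}"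
    and "guards K1 C R (closed_nbhd V E (set P1))"
    and "guards K2 C R (closed_nbhd V E (set P2))"
  shows "confines (K1 \<union> K2) C R D"
proof (rule confines_if_guards_exits[OF assms(10) _ _ guards_Un[OF assms(20,21)]])
  show "R 0 \<in> D"
    unfolding assms(14) using assms(13) by (rule gcomponent_refl)
  fix u v
  assume uv: "u \<in> D" "E u v" "v \<notin> D"
  have "v \<in> V"
    using \<open>E u v\<close> assms(1) unfolding simple_graph_def by blast
  obtain x where "F = closure (connected_component_set (- (path_image \<pi>1 \<union> path_image \<pi>2)) x)"
    using assms(11) by blast
  moreover have "closed (path_image \<pi>1 \<union> path_image \<pi>2)"
    using assms(3,4) by (intro closed_Un closed_path_image)
  ultimately have "frontier (interior F) \<subseteq> path_image \<pi>1 \<union> path_image \<pi>2"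
    using frontier_interior_closure_component_subset by metis
  moreover have "\<phi> v \<inter> frontier (interior F) \<noteq> {}"
    using string_leaving_component_meets_frontier[OF assms(2) _ \<open>E u v\<close> \<open>v \<in> V\<close>] uv
    unfolding assms(14) by blast
  ultimately obtain z where z: "z \<in> \<phi> v" "z \<in> path_image \<pi>1 \<or> z \<in> path_image \<pi>2"
    by blast
  have "v \<in> closed_nbhd V E (set Pk)"
    if "shortest_curve_rel V E \<phi> D Pk \<pi>" "z \<in> path_image \<pi>" for Pk \<pi>
    using string_meeting_curve_in_closed_nbhd[OF assms(2) _ _ \<open>z \<in> path_image \<pi>\<close> z(1) \<open>v \<in> V\<close>]
      that(1) shortest_curve_rel_path_subset[OF that(1)]
    unfolding shortest_curve_rel_def by blast
  then show "v \<in> closed_nbhd V E (set P1) \<union> closed_nbhd V E (set P2)"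
    using z(2) assms(15,16) by blast
qed

end
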